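(* For every environment $\mu$, $$\sum_{a\in Z(\mu)}\beta(a)=|\mathcal A|.$$
   Context: Game tree: $V$ is the node set of a finite rooted tree with root $r$ and leaf set $L$; $C(v)$ denotes the set of children of $v$ and $p(v)$ the parent of $v\ne r$. The internal nodes are partitioned into infosets $N$ and actions $\mathcal A$ with $r\in N$, $C(v)\subseteq\mathcal A$ and $|C(v)|>1$ for $v\in N$, and $C(a)\subseteq N\cup L$ for $a\in\mathcal A$. An environment is a map $\mu:\mathcal A\to V$ with $\mu(a)\in C(a)$ for all $a$. For an environment $\mu$, $V(\mu)$ is the smallest subset of $V$ containing $r$, containing $C(v)$ for each $v\in N\cap V(\mu)$, and containing $\mu(a)$ for each $a\in\mathcal A\cap V(\mu)$. $Z(\mu)$ is the set of all $a\in\mathcal A\cap V(\mu)$ with $\mu(a)\in L$. Define $m:N\cup\mathcal A\to\mathbb N$ recursively from the bottom by $m(a)=1+\sum_{v\in C(a)\cap N}m(v)$ for $a\in\mathcal A$ and $m(v)=\sum_{a\in C(v)}m(a)$ for $v\in N$. Define $\beta$ from the top by $\beta(r)=1$, $\beta(a)=m(a)\beta(p(a))$ for $a\in\mathcal A$, $\beta(v)=\beta(p(v))/m(v)$ for $v\in N\setminus\{r\}$. *)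

theory Defs
  imports Complex_Main
begin

text \<open>A finite rooted tree: node set V (finite), root r, parent map p.
  Children of v: the non-root nodes of V whose parent is v.\<close>

definition children :: "'v set \<Rightarrow> 'v \<Rightarrow> ('v \<Rightarrow> 'v) \<Rightarrow> 'v \<Rightarrow> 'v set" where
  "children V r p v = {w \<in> V. w \<noteq> r \<and> p w = v}"

definition leaves :: "'v set \<Rightarrow> 'v \<Rightarrow> ('v \<Rightarrow> 'v) \<Rightarrow> 'v set" where
  "leaves V r p = {v \<in> V. children V r p v = {}}"

definition game_tree ::
  "'v set \<Rightarrow> 'v \<Rightarrow> ('v \<Rightarrow> 'v) \<Rightarrow> 'v set \<Rightarrow> 'v set \<Rightarrow> bool" where
  "game_tree V r p N A \<longleftrightarrow>
     finite V \<and> r \<in> V \<and>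
     (\<forall>v\<in>V - {r}. p v \<in> V) \<and>
     (\<forall>v\<in>V. \<exists>k. (p ^^ k) v = r) \<and>
     N \<inter> A = {} \<and>
     N \<union> A = {v \<in> V. children V r p v \<noteq> {}} \<and>
     r \<in> N \<and>
     (\<forall>v\<in>N. children V r p v \<subseteq> A \<and> card (children V r p v) > 1) \<and>
     (\<forall>a\<in>A. children V r p a \<subseteq> N \<union> leaves V r p)"

definition environment ::
  "'v set \<Rightarrow> 'v \<Rightarrow> ('v \<Rightarrow> 'v) \<Rightarrow> 'v set \<Rightarrow> ('v \<Rightarrow> 'v) \<Rightarrow> bool" where
  "environment V r p A \<mu> \<longleftrightarrow> (\<forall>a\<in>A. \<mu> a \<in> children V r p a)"

inductive_set Vmu ::
  "'v set \<Rightarrow> 'v \<Rightarrow> ('v \<Rightarrow> 'v) \<Rightarrow> 'v set \<Rightarrow> 'v set \<Rightarrow> ('v \<Rightarrow> 'v) \<Rightarrow> 'v set"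
  for V r p N A \<mu> where
  root: "r \<in> Vmu V r p N A \<mu>"
| info: "v \<in> Vmu V r p N A \<mu> \<Longrightarrow> v \<in> N \<Longrightarrow> w \<in> children V r p v \<Longrightarrow> w \<in> Vmu V r p N A \<mu>"
| act:  "a \<in> Vmu V r p N A \<mu> \<Longrightarrow> a \<in> A \<Longrightarrow> \<mu> a \<in> Vmu V r p N A \<mu>"

definition Zmu ::
  "'v set \<Rightarrow> 'v \<Rightarrow> ('v \<Rightarrow> 'v) \<Rightarrow> 'v set \<Rightarrow> 'v set \<Rightarrow> ('v \<Rightarrow> 'v) \<Rightarrow> 'v set" where
  "Zmu V r p N A \<mu> = {a \<in> A \<inter> Vmu V r p N A \<mu>. \<mu> a \<in> leaves V r p}"

text \<open>The bottom-up recursion for m, with a fuel parameter (the height of the tree is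
  less than card V, so fuel card V suffices).\<close>
fun m_aux :: "'v set \<Rightarrow> 'v \<Rightarrow> ('v \<Rightarrow> 'v) \<Rightarrow> 'v set \<Rightarrow> 'v set \<Rightarrow> nat \<Rightarrow> 'v \<Rightarrow> nat" where
  "m_aux V r p N A 0 x = 0"
| "m_aux V r p N A (Suc k) x =
     (if x \<in> A then 1 + (\<Sum>v\<in>children V r p x \<inter> N. m_aux V r p N A k v)
      else (\<Sum>a\<in>children V r p x. m_aux V r p N A k a))"

definition mfun :: "'v set \<Rightarrow> 'v \<Rightarrow> ('v \<Rightarrow> 'v) \<Rightarrow> 'v set \<Rightarrow> 'v set \<Rightarrow> 'v \<Rightarrow> nat" where
  "mfun V r p N A x = m_aux V r p N A (card V) x"

text \<open>The top-down recursion for beta, with fuel (depth is less than card V).\<close>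
fun beta_aux :: "'v set \<Rightarrow> 'v \<Rightarrow> ('v \<Rightarrow> 'v) \<Rightarrow> 'v set \<Rightarrow> 'v set \<Rightarrow> nat \<Rightarrow> 'v \<Rightarrow> real" where
  "beta_aux V r p N A 0 x = 0"
| "beta_aux V r p N A (Suc k) x =
     (if x = r then 1
      else if x \<in> A then real (mfun V r p N A x) * beta_aux V r p N A k (p x)
      else if x \<in> N then beta_aux V r p N A k (p x) / real (mfun V r p N A x)
      else 0)"

definition beta :: "'v set \<Rightarrow> 'v \<Rightarrow> ('v \<Rightarrow> 'v) \<Rightarrow> 'v set \<Rightarrow> 'v set \<Rightarrow> 'v \<Rightarrow> real" where
  "beta V r p N A x = beta_aux V r p N A (card V) x"

end

theory Submission
  imports Defs
begin

text \<open>The weight m x counts the actions in the subtree below x, so m r = |A|.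
  Below an infoset v the weights split as \<beta> a = m a \<beta> v, where the m a sum to m v, and an
  action a whose chosen successor is an infoset v hands on \<beta> a = m v \<beta> v.  Summing
  \<beta> over the actions reached under \<mu>, everything telescopes except the root term
  m r \<beta> r = |A| and the actions whose chosen successor is a leaf.\<close>

locale rooted_game_tree =
  fixes V :: "'v set" and r :: 'v and p :: "'v \<Rightarrow> 'v" and N A :: "'v set"
  assumes game_tree: "game_tree V r p N A"
begin

abbreviation C :: "'v \<Rightarrow> 'v set" where "C x \<equiv> children V r p x"
abbreviation m :: "'v \<Rightarrow> nat" where "m \<equiv> mfun V r p N A"
abbreviation \<beta> :: "'v \<Rightarrow> real" where "\<beta> \<equiv> beta V r p N A"

lemma finite_V: "finite V"
  and root_in_V: "r \<in> V"
  and parent_in_V: "v \<in> V \<Longrightarrow> v \<noteq> r \<Longrightarrow> p v \<in> V"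
  and root_reachable: "v \<in> V \<Longrightarrow> \<exists>k. (p ^^ k) v = r"
  and infosets_actions_disjoint: "N \<inter> A = {}"
  and infosets_Un_actions: "N \<union> A = {v \<in> V. C v \<noteq> {}}"
  and root_infoset: "r \<in> N"
  and children_infoset: "v \<in> N \<Longrightarrow> C v \<subseteq> A"
  and card_children_infoset: "v \<in> N \<Longrightarrow> card (C v) > 1"
  and children_action: "a \<in> A \<Longrightarrow> C a \<subseteq> N \<union> leaves V r p"
  using game_tree unfolding game_tree_def by auto

lemma in_childrenD: "c \<in> C x \<Longrightarrow> c \<in> V \<and> c \<noteq> r \<and> p c = x"
  unfolding children_def by auto

lemma finite_children: "finite (C x)"
  using finite_V by (rule rev_finite_subset) (auto simp: children_def)

lemma infosets_subset_V: "N \<subseteq> V" and actions_subset_V: "A \<subseteq> V"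
  using infosets_Un_actions by auto

lemma leaf_not_inner: "x \<in> leaves V r p \<Longrightarrow> x \<notin> N \<and> x \<notin> A"
  using infosets_Un_actions unfolding leaves_def by blast

definition depth :: "'v \<Rightarrow> nat" where "depth x = (LEAST k. (p ^^ k) x = r)"

lemma funpow_depth: "x \<in> V \<Longrightarrow> (p ^^ depth x) x = r"
  unfolding depth_def using root_reachable by (metis (mono_tags, lifting) LeastI_ex)

lemma depth_le: "(p ^^ k) x = r \<Longrightarrow> depth x \<le> k"
  unfolding depth_def by (rule Least_le)

lemma depth_parent:
  assumes "x \<in> V" "x \<noteq> r"
  shows "depth x = Suc (depth (p x))"
proof -
  have "depth x \<noteq> 0" using funpow_depth[OF assms(1)] assms(2) by (metis funpow_0)
  then obtain j where j: "depth x = Suc j" by (cases "depth x") auto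
  have "(p ^^ j) (p x) = r"
    using funpow_depth[OF assms(1)] j by (simp add: funpow_Suc_right del: funpow.simps)
  then have "depth (p x) \<le> j" by (rule depth_le)
  moreover have "(p ^^ Suc (depth (p x))) x = r"
    using funpow_depth[OF parent_in_V[OF assms]] by (simp add: funpow_Suc_right del: funpow.simps)
  then have "depth x \<le> Suc (depth (p x))" by (rule depth_le)
  ultimately show ?thesis using j by simp
qed

lemma depth_child: "c \<in> C x \<Longrightarrow> depth c = Suc (depth x)"
  using in_childrenD depth_parent by metis

lemma ancestor_in_V: "x \<in> V \<Longrightarrow> i \<le> depth x \<Longrightarrow> (p ^^ i) x \<in> V"
proof (induction i)
  case 0
  then show ?case by simp
next
  case (Suc i)
  have "(p ^^ i) x \<noteq> r" using depth_le[of i x] Suc.prems by auto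
  then show ?case using Suc parent_in_V by auto
qed

text \<open>A repeated ancestor would give a path to the root shorter than the depth.\<close>
lemma inj_on_ancestors: "x \<in> V \<Longrightarrow> inj_on (\<lambda>i. (p ^^ i) x) {..depth x}"
proof -
  assume x: "x \<in> V"
  have no_repeat: False if ij: "i < j" "j \<le> depth x" and eq: "(p ^^ i) x = (p ^^ j) x" for i j
  proof -
    have "(p ^^ (depth x - j + i)) x = (p ^^ (depth x - j)) ((p ^^ j) x)"
      by (simp add: funpow_add eq)
    also have "\<dots> = r"
      using funpow_depth[OF x] ij by (metis funpow_add comp_apply le_add_diff_inverse2)
    finally have "depth x \<le> depth x - j + i" by (rule depth_le)
    then show False using ij by simp
  qed
  show ?thesis
  proof (rule inj_onI)
    fix i j assume "i \<in> {..depth x}" "j \<in> {..depth x}" "(p ^^ i) x = (p ^^ j) x"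
    then show "i = j" using no_repeat[of i j] no_repeat[of j i] by (cases i j rule: linorder_cases) auto
  qed
qed

lemma depth_less_card: "x \<in> V \<Longrightarrow> depth x < card V"
proof -
  assume x: "x \<in> V"
  have "(\<lambda>i. (p ^^ i) x) ` {..depth x} \<subseteq> V" using ancestor_in_V x by auto
  then have "card ((\<lambda>i. (p ^^ i) x) ` {..depth x}) \<le> card V" using finite_V by (simp add: card_mono)
  then show ?thesis using card_image[OF inj_on_ancestors[OF x]] by simp
qed

text \<open>The subtree below x has height less than card V - depth x, so any fuel beyond that
  computes the same value.\<close>
lemma m_aux_fuel_irrelevant:
  "x \<in> V \<Longrightarrow> card V - depth x \<le> k \<Longrightarrow> card V - depth x \<le> k' \<Longrightarrow>
   m_aux V r p N A k x = m_aux V r p N A k' x"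
proof (induction k arbitrary: x k')
  case 0
  then show ?case using depth_less_card[OF 0(1)] by simp
next
  case (Suc j)
  then obtain j' where k': "k' = Suc j'" using depth_less_card[OF Suc(2)] by (cases k') auto
  have "m_aux V r p N A j c = m_aux V r p N A j' c" if "c \<in> C x" for c
    using Suc.IH[of c j'] in_childrenD[OF that] depth_child[OF that] Suc.prems k' by simp
  then show ?case unfolding k' by (auto intro!: sum.cong)
qed

lemma m_rec:
  assumes "x \<in> V"
  shows "m x = (if x \<in> A then 1 + (\<Sum>c\<in>C x \<inter> N. m c) else (\<Sum>c\<in>C x. m c))"
proof -
  obtain j where j: "card V = Suc j" using depth_less_card[OF assms] by (cases "card V") auto
  have "m_aux V r p N A j c = m c" if "c \<in> C x" for c
    unfolding mfun_def
    using m_aux_fuel_irrelevant[of c j "card V"] in_childrenD[OF that] depth_child[OF that] j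
    by simp
  then show ?thesis unfolding mfun_def j m_aux.simps by (auto intro!: sum.cong)
qed

lemma beta_aux_fuel_irrelevant:
  "x \<in> V \<Longrightarrow> depth x < k \<Longrightarrow> depth x < k' \<Longrightarrow>
   beta_aux V r p N A k x = beta_aux V r p N A k' x"
proof (induction k arbitrary: x k')
  case 0
  then show ?case by simp
next
  case (Suc j)
  then obtain j' where k': "k' = Suc j'" by (cases k') auto
  show ?case
  proof (cases "x = r")
    case True
    then show ?thesis unfolding k' by simp
  next
    case False
    have "beta_aux V r p N A j (p x) = beta_aux V r p N A j' (p x)"
      using Suc.IH[of "p x" j'] parent_in_V[OF Suc(2) False] depth_parent[OF Suc(2) False]
        Suc.prems k'
      by simp
    then show ?thesis unfolding k' by simp
  qed
qed

lemma beta_rec: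
  assumes "x \<in> V"
  shows "\<beta> x = (if x = r then 1 else if x \<in> A then real (m x) * \<beta> (p x)
    else if x \<in> N then \<beta> (p x) / real (m x) else 0)"
proof -
  obtain j where j: "card V = Suc j" using depth_less_card[OF assms] by (cases "card V") auto
  have "beta_aux V r p N A j (p x) = \<beta> (p x)" if "x \<noteq> r"
    unfolding beta_def
    using beta_aux_fuel_irrelevant[of "p x" j "card V"] parent_in_V[OF assms that]
      depth_parent[OF assms that] depth_less_card[OF assms] j
    by simp
  then show ?thesis unfolding beta_def j beta_aux.simps by auto
qed

lemma beta_root: "\<beta> r = 1"
  using beta_rec[OF root_in_V] by simp

lemma action_parent:
  assumes "a \<in> A"
  shows "a \<noteq> r \<and> p a \<in> N \<and> a \<in> C (p a)"
proof -
  have a: "a \<in> V" "a \<noteq> r"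
    using assms actions_subset_V root_infoset infosets_actions_disjoint by auto
  have pa: "p a \<in> V" using parent_in_V a by auto
  have ac: "a \<in> C (p a)" using a pa unfolding children_def by auto
  have "p a \<in> N \<union> A" using infosets_Un_actions pa ac by blast
  moreover have "p a \<notin> A"
  proof
    assume "p a \<in> A"
    then have "a \<in> N \<union> leaves V r p" using children_action ac by blast
    then show False using assms infosets_actions_disjoint leaf_not_inner by blast
  qed
  ultimately show ?thesis using a ac by auto
qed

lemma infoset_parent:
  assumes "v \<in> N" "v \<noteq> r"
  shows "p v \<in> A \<and> v \<in> C (p v)"
proof -
  have v: "v \<in> V" using assms infosets_subset_V by auto
  have pv: "p v \<in> V" using parent_in_V v assms by auto
  have vc: "v \<in> C (p v)" using v pv assms unfolding children_def by auto
  have "p v \<in> N \<union> A" using infosets_Un_actions pv vc by blast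
  moreover have "p v \<notin> N" using children_infoset vc assms infosets_actions_disjoint by blast
  ultimately show ?thesis using vc by auto
qed

lemma children_infoset_eq: "v \<in> N \<Longrightarrow> C v = {a \<in> A. p a = v}"
  using children_infoset in_childrenD action_parent by blast

lemma children_action_infosets: "C a \<inter> N = {w \<in> N - {r}. p w = a}"
  using in_childrenD infosets_subset_V unfolding children_def by auto

lemma m_infoset_children:
  assumes "v \<in> N"
  shows "m v = (\<Sum>c\<in>C v. m c)"
proof -
  have "v \<in> V" "v \<notin> A" using assms infosets_subset_V infosets_actions_disjoint by auto
  then show ?thesis using m_rec[of v] by simp
qed

lemma m_infoset_pos:
  assumes "v \<in> N"
  shows "m v > 0"
proof -
  have "C v \<noteq> {}" using card_children_infoset[OF assms] by (metis card.empty not_less_zero)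
  then obtain a where a: "a \<in> C v" by auto
  have "a \<in> A" using children_infoset[OF assms] a by auto
  then have "1 \<le> m a" using m_rec actions_subset_V by auto
  also have "\<dots> \<le> (\<Sum>c\<in>C v. m c)" using a finite_children by (rule_tac member_le_sum) auto
  also have "\<dots> = m v" using m_infoset_children[OF assms] by simp
  finally show ?thesis by simp
qed

lemma m_infoset: "v \<in> N \<Longrightarrow> m v = (\<Sum>a\<in>{a \<in> A. p a = v}. m a)"
  using m_infoset_children children_infoset_eq by metis

lemma m_action: "a \<in> A \<Longrightarrow> m a = 1 + (\<Sum>w\<in>{w \<in> N - {r}. p w = a}. m w)"
  using m_rec[of a] actions_subset_V children_action_infosets by auto

text \<open>Sum m over all infosets twice: once grouping the actions by their parent infoset, once
  grouping the non-root infosets by their parent action.\<close>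
lemma m_root: "m r = card A"
proof -
  have fin_N: "finite N" and fin_A: "finite A"
    using finite_V infosets_subset_V actions_subset_V finite_subset by auto
  have "(\<Sum>v\<in>N. m v) = (\<Sum>v\<in>N. \<Sum>a\<in>{a \<in> A. p a = v}. m a)"
    using m_infoset by simp
  also have "\<dots> = (\<Sum>a\<in>A. m a)"
    using fin_A fin_N action_parent by (intro sum.group) auto
  also have "\<dots> = (\<Sum>a\<in>A. 1 + (\<Sum>w\<in>{w \<in> N - {r}. p w = a}. m w))"
    using m_action by simp
  also have "\<dots> = card A + (\<Sum>a\<in>A. \<Sum>w\<in>{w \<in> N - {r}. p w = a}. m w)"
    by (simp only: sum.distrib) simp
  also have "(\<Sum>a\<in>A. \<Sum>w\<in>{w \<in> N - {r}. p w = a}. m w) = (\<Sum>w\<in>N - {r}. m w)"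
    using fin_N fin_A infoset_parent by (intro sum.group) auto
  finally have "(\<Sum>v\<in>N. m v) = card A + (\<Sum>w\<in>N - {r}. m w)" .
  moreover have "(\<Sum>v\<in>N. m v) = m r + (\<Sum>w\<in>N - {r}. m w)"
    using fin_N root_infoset by (simp add: sum.remove)
  ultimately show ?thesis by simp
qed

lemma sum_beta_children_infoset:
  assumes "v \<in> N"
  shows "(\<Sum>a\<in>C v. \<beta> a) = m v * \<beta> v"
proof -
  have "(\<Sum>a\<in>C v. \<beta> a) = (\<Sum>a\<in>C v. m a * \<beta> v)"
    using beta_rec in_childrenD children_infoset[OF assms] by (intro sum.cong) auto
  also have "\<dots> = (\<Sum>a\<in>C v. m a) * \<beta> v" by (simp add: sum_distrib_right)
  also have "(\<Sum>a\<in>C v. m a) = m v" using m_infoset_children[OF assms] by simp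
  finally show ?thesis .
qed

lemma m_beta_infoset:
  assumes "v \<in> N" "v \<noteq> r"
  shows "m v * \<beta> v = \<beta> (p v)"
proof -
  have "v \<in> V" "v \<notin> A" using assms infosets_subset_V infosets_actions_disjoint by auto
  then have "\<beta> v = \<beta> (p v) / m v" using beta_rec[of v] assms by simp
  then show ?thesis using m_infoset_pos[OF assms(1)] by simp
qed

context
  fixes \<mu> assumes environment: "environment V r p A \<mu>"
begin

abbreviation W :: "'v set" where "W \<equiv> Vmu V r p N A \<mu>"

lemma env_child: "a \<in> A \<Longrightarrow> \<mu> a \<in> C a"
  using environment unfolding environment_def by auto

lemma env_infoset_or_leaf: "a \<in> A \<Longrightarrow> \<mu> a \<in> N \<or> \<mu> a \<in> leaves V r p"
  using children_action env_child by blast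

lemma inj_on_env: "inj_on \<mu> A"
  by (metis env_child in_childrenD inj_onI)

lemma reached_subset_V: "W \<subseteq> V"
proof
  show "x \<in> W \<Longrightarrow> x \<in> V" for x
    by (induction rule: Vmu.induct) (auto simp: root_in_V dest: in_childrenD env_child)
qed

lemma finite_reached: "finite W"
  using reached_subset_V finite_V by (rule finite_subset)

lemma reached_parent:
  assumes "v \<in> W" "v \<noteq> r"
  shows "p v \<in> W \<and> (p v \<in> N \<or> p v \<in> A \<and> v = \<mu> (p v))"
  using assms(1)
proof (cases rule: Vmu.cases)
  case root
  then show ?thesis using assms by simp
next
  case (info w)
  then show ?thesis using in_childrenD by auto
next
  case (act a)
  then show ?thesis using in_childrenD[OF env_child] by auto
qed

lemma reached_children_infoset:
  assumes "v \<in> N \<inter> W"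
  shows "C v = {a \<in> A \<inter> W. p a = v}"
proof -
  have "C v \<subseteq> W" using assms by (auto intro: Vmu.info)
  moreover have "C v = {a \<in> A. p a = v}" using assms children_infoset_eq by blast
  ultimately show ?thesis by blast
qed

lemma sum_beta_reached_actions:
  "(\<Sum>a\<in>A \<inter> W. \<beta> a) = (\<Sum>v\<in>N \<inter> W. m v * \<beta> v)"
proof -
  have fin: "finite (A \<inter> W)" "finite (N \<inter> W)" using finite_reached by auto
  have "p ` (A \<inter> W) \<subseteq> N \<inter> W"
    using action_parent reached_parent infosets_actions_disjoint by fastforce
  then have "(\<Sum>a\<in>A \<inter> W. \<beta> a) = (\<Sum>v\<in>N \<inter> W. \<Sum>a\<in>{a \<in> A \<inter> W. p a = v}. \<beta> a)"
    using fin by (intro sum.group[symmetric]) auto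
  also have "\<dots> = (\<Sum>v\<in>N \<inter> W. m v * \<beta> v)"
  proof (rule sum.cong)
    fix v assume v: "v \<in> N \<inter> W"
    then show "(\<Sum>a\<in>{a \<in> A \<inter> W. p a = v}. \<beta> a) = m v * \<beta> v"
      unfolding reached_children_infoset[OF v, symmetric] by (simp add: sum_beta_children_infoset)
  qed simp
  finally show ?thesis .
qed

lemma env_image_continuing:
  "\<mu> ` {a \<in> A \<inter> W. \<mu> a \<in> N} = N \<inter> W - {r}"
proof
  show "\<mu> ` {a \<in> A \<inter> W. \<mu> a \<in> N} \<subseteq> N \<inter> W - {r}"
  proof
    fix v assume "v \<in> \<mu> ` {a \<in> A \<inter> W. \<mu> a \<in> N}"
    then obtain a where a: "a \<in> A" "a \<in> W" "\<mu> a \<in> N" "v = \<mu> a" by auto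
    then have "\<mu> a \<in> W" by (intro Vmu.act)
    moreover have "\<mu> a \<noteq> r" using in_childrenD[OF env_child[OF a(1)]] by simp
    ultimately show "v \<in> N \<inter> W - {r}" using a by auto
  qed
next
  show "N \<inter> W - {r} \<subseteq> \<mu> ` {a \<in> A \<inter> W. \<mu> a \<in> N}"
  proof
    fix v assume v: "v \<in> N \<inter> W - {r}"
    then have "p v \<in> A" using infoset_parent by auto
    then have "p v \<in> A \<inter> W \<and> v = \<mu> (p v)"
      using reached_parent[of v] v infosets_actions_disjoint by auto
    then show "v \<in> \<mu> ` {a \<in> A \<inter> W. \<mu> a \<in> N}" using v by auto
  qed
qed

lemma sum_beta_continuing_actions:
  "(\<Sum>a\<in>{a \<in> A \<inter> W. \<mu> a \<in> N}. \<beta> a) = (\<Sum>v\<in>N \<inter> W - {r}. m v * \<beta> v)"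
proof -
  have inj: "inj_on \<mu> {a \<in> A \<inter> W. \<mu> a \<in> N}"
    using inj_on_env by (rule inj_on_subset) auto
  have "(\<Sum>v\<in>N \<inter> W - {r}. m v * \<beta> v) = (\<Sum>a\<in>{a \<in> A \<inter> W. \<mu> a \<in> N}. m (\<mu> a) * \<beta> (\<mu> a))"
    unfolding env_image_continuing[symmetric] using sum.reindex[OF inj] by simp
  also have "\<dots> = (\<Sum>a\<in>{a \<in> A \<inter> W. \<mu> a \<in> N}. \<beta> a)"
    using m_beta_infoset in_childrenD[OF env_child] by (intro sum.cong) auto
  finally show ?thesis by simp
qed

lemma sum_beta_terminal_actions: "(\<Sum>a\<in>Zmu V r p N A \<mu>. \<beta> a) = card A"
proof -
  let ?Z = "Zmu V r p N A \<mu>" and ?Y = "{a \<in> A \<inter> W. \<mu> a \<in> N}"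
  have split: "A \<inter> W = ?Z \<union> ?Y" "?Z \<inter> ?Y = {}"
    using env_infoset_or_leaf leaf_not_inner unfolding Zmu_def by auto
  have fin: "finite ?Z" "finite ?Y" using finite_reached unfolding Zmu_def by auto
  have "(\<Sum>a\<in>A \<inter> W. \<beta> a) = (\<Sum>a\<in>?Z \<union> ?Y. \<beta> a)" using split(1) by (rule arg_cong)
  also have "\<dots> = (\<Sum>a\<in>?Z. \<beta> a) + (\<Sum>a\<in>?Y. \<beta> a)" using fin split(2) by (rule sum.union_disjoint)
  finally have "(\<Sum>a\<in>A \<inter> W. \<beta> a) = (\<Sum>a\<in>?Z. \<beta> a) + (\<Sum>a\<in>?Y. \<beta> a)" .
  moreover have "r \<in> N \<inter> W" using root_infoset by (simp add: Vmu.root)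
  then have "(\<Sum>v\<in>N \<inter> W. m v * \<beta> v) = m r + (\<Sum>v\<in>N \<inter> W - {r}. m v * \<beta> v)"
    using finite_reached beta_root by (simp add: sum.remove)
  ultimately show ?thesis
    using sum_beta_reached_actions sum_beta_continuing_actions m_root by simp
qed

end

end

theorem mainTheorem5:
  fixes V N A :: "'v set" and r :: 'v and p \<mu> :: "'v \<Rightarrow> 'v"
  assumes "game_tree V r p N A"
    and "environment V r p A \<mu>"
  shows "(\<Sum>a\<in>Zmu V r p N A \<mu>. beta V r p N A a) = real (card A)"
proof -
  interpret rooted_game_tree V r p N A using assms(1) by unfold_locales
  show ?thesis using sum_beta_terminal_actions[OF assms(2)] .
qed

end
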